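(* Assume (SD). Let $D:=\{u\in\mathcal H^2_{\frac1a}(0,1):\ au'\in H^1(0,1)\text{ and }u(x_0)=(au')(x_0)=0\}$. Then $D(\mathcal A_2)=\mathcal H^2_{\frac1a}(0,1)=D$.
   Context: (SD): there exists $x_0\in(0,1)$ with $a(x_0)=0$, $a>0$ on $[0,1]\setminus\{x_0\}$, $a\in W^{1,\infty}(0,1)$, and there exists $K\in[1,2)$ with $(x-x_0)a'(x)\le Ka(x)$ for a.e. $x\in[0,1]$. $L^2_{\frac1a}(0,1)=\{u\in L^2(0,1):\int_0^1u^2/a<\infty\}$, $\mathcal H^1_{\frac1a}(0,1)=L^2_{\frac1a}(0,1)\cap H^1_0(0,1)$, $\mathcal H^2_{\frac1a}(0,1)=\{u\in\mathcal H^1_{\frac1a}(0,1):u'\in H^1(0,1)\}$. The operator is $\mathcal A_2u=au''$ with domain $D(\mathcal A_2):=\mathcal H^2_{\frac1a}(0,1)$. *)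

theory Defs
  imports "HOL-Analysis.Analysis"
begin

text \<open>Functions on (0,1) are modelled as functions real \<Rightarrow> real; only their values on
  [0,1] matter.  Integrals are Lebesgue integrals over {0..1}.\<close>

definition L2 :: "(real \<Rightarrow> real) \<Rightarrow> bool" where
  "L2 u \<longleftrightarrow> set_borel_measurable lebesgue {0..1} u
      \<and> set_integrable lebesgue {0..1} (\<lambda>x. (u x)^2)"

definition Linf :: "(real \<Rightarrow> real) \<Rightarrow> bool" where
  "Linf u \<longleftrightarrow> set_borel_measurable lebesgue {0..1} u
      \<and> (\<exists>M. AE x in lebesgue. x \<in> {0..1} \<longrightarrow> \<bar>u x\<bar> \<le> M)"

definition test_fun :: "(real \<Rightarrow> real) \<Rightarrow> bool" where
  "test_fun \<phi> \<longleftrightarrow> (\<forall>n x. ((deriv ^^ n) \<phi>) differentiable (at x))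
      \<and> (\<exists>c d. 0 < c \<and> c \<le> d \<and> d < 1 \<and> (\<forall>x. x \<notin> {c..d} \<longrightarrow> \<phi> x = 0))"

definition weak_deriv :: "(real \<Rightarrow> real) \<Rightarrow> (real \<Rightarrow> real) \<Rightarrow> bool" where
  "weak_deriv u g \<longleftrightarrow> set_integrable lebesgue {0..1} u \<and> set_integrable lebesgue {0..1} g
      \<and> (\<forall>\<phi>. test_fun \<phi> \<longrightarrow>
           (LINT x:{0..1}|lebesgue. u x * deriv \<phi> x) = - (LINT x:{0..1}|lebesgue. g x * \<phi> x))"

text \<open>H^1(0,1), each class identified with its continuous representative on [0,1].\<close>
definition H1 :: "(real \<Rightarrow> real) \<Rightarrow> bool" where
  "H1 u \<longleftrightarrow> continuous_on {0..1} u \<and> L2 u \<and> (\<exists>g. L2 g \<and> weak_deriv u g)"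

definition H1_0 :: "(real \<Rightarrow> real) \<Rightarrow> bool" where
  "H1_0 u \<longleftrightarrow> H1 u \<and> u 0 = 0 \<and> u 1 = 0"

definition W1inf :: "(real \<Rightarrow> real) \<Rightarrow> bool" where
  "W1inf a \<longleftrightarrow> continuous_on {0..1} a \<and> Linf a \<and> (\<exists>g. Linf g \<and> weak_deriv a g)"

definition L2_w :: "(real \<Rightarrow> real) \<Rightarrow> (real \<Rightarrow> real) \<Rightarrow> bool" where
  "L2_w a u \<longleftrightarrow> L2 u \<and> set_integrable lebesgue {0..1} (\<lambda>x. (u x)^2 / a x)"

definition H1_w :: "(real \<Rightarrow> real) \<Rightarrow> (real \<Rightarrow> real) set" where
  "H1_w a = {u. L2_w a u \<and> H1_0 u}"

definition H2_w :: "(real \<Rightarrow> real) \<Rightarrow> (real \<Rightarrow> real) set" where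
  "H2_w a = {u. u \<in> H1_w a \<and> (\<exists>g. weak_deriv u g \<and> H1 g)}"

definition dom_A2 :: "(real \<Rightarrow> real) \<Rightarrow> (real \<Rightarrow> real) set" where
  "dom_A2 a = H2_w a"

definition SD :: "(real \<Rightarrow> real) \<Rightarrow> real \<Rightarrow> real \<Rightarrow> bool" where
  "SD a x0 K \<longleftrightarrow> 0 < x0 \<and> x0 < 1 \<and> a x0 = 0 \<and> (\<forall>x\<in>{0..1} - {x0}. a x > 0)
     \<and> W1inf a \<and> 1 \<le> K \<and> K < 2
     \<and> (\<exists>a'. weak_deriv a a' \<and> Linf a' \<and>
          (AE x in lebesgue. x \<in> {0..1} \<longrightarrow> (x - x0) * a' x \<le> K * a x))"

text \<open>The set D: (a u') \<in> H^1 (i.e. a times the weak derivative of u agrees a.e. with an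
  H^1 function h, taken continuous) and u(x0) = (a u')(x0) = 0.\<close>
definition D_set :: "(real \<Rightarrow> real) \<Rightarrow> real \<Rightarrow> (real \<Rightarrow> real) set" where
  "D_set a x0 = {u. u \<in> H2_w a \<and> u x0 = 0 \<and>
      (\<exists>g h. weak_deriv u g \<and> H1 h \<and> (AE x in lebesgue. x \<in> {0..1} \<longrightarrow> h x = a x * g x)
             \<and> h x0 = 0)}"

end

theory Submission
  imports Defs "HOL-Computational_Algebra.Polynomial"
begin

text \<open>
  Every u in the weighted space vanishes at x0: the weight a is Lipschitz and vanishes at x0,
  so 1/a is not integrable near x0, whereas u^2/a is.  Moreover a u' lies in H^1: a and u' are
  absolutely continuous with square integrable derivatives, hence so is their product, and
  (a u')(x0) = a(x0) u'(x0) = 0.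

  The product rule requires identifying weak derivatives with the representation
  u(t) = u(0) + (integral of u' over [0, t]).  One direction is integration by parts, proved
  with Fubini's theorem; for the other, testing against smooth plateau functions approximating
  the indicator of [x, y] recovers u(y) - u(x) as the integral of u' over [x, y].
\<close>

section \<open>Fubini on a triangle\<close>

lemma sigma_finite_lebesgue: "sigma_finite_measure (lebesgue :: real measure)"
proof -
  have "sigma_finite_measure (completion (lborel :: real measure))"
  proof (unfold sigma_finite_measure_def, intro exI conjI)
    show "countable (range (\<lambda>n::nat. {-real n..real n}))" by simp
    show "range (\<lambda>n::nat. {-real n..real n}) \<subseteq> sets (completion lborel)" by auto
    show "\<Union> (range (\<lambda>n::nat. {-real n..real n})) = space (completion lborel)"
      by (auto simp: real_arch_simple)
         (metis abs_le_iff minus_le_iff real_arch_simple abs_ge_self order_trans)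
    show "\<forall>a\<in>range (\<lambda>n::nat. {- real n..real n}). emeasure (completion lborel) a \<noteq> \<infinity>"
      by auto
  qed
  then show ?thesis by simp
qed

interpretation lebesgue: sigma_finite_measure "lebesgue :: real measure"
  by (rule sigma_finite_lebesgue)

interpretation lebesgue_pair: pair_sigma_finite "lebesgue :: real measure" "lebesgue :: real measure" ..

lemma measurable_fst_lebesgue [measurable]:
  "fst \<in> borel_measurable ((lebesgue :: real measure) \<Otimes>\<^sub>M lebesgue)"
  by (rule measurable_compose[OF measurable_fst, where g="\<lambda>x. x", simplified])
     (simp add: measurable_completion)

lemma measurable_snd_lebesgue [measurable]:
  "snd \<in> borel_measurable ((lebesgue :: real measure) \<Otimes>\<^sub>M lebesgue)"
  by (rule measurable_compose[OF measurable_snd, where g="\<lambda>x. x", simplified])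
     (simp add: measurable_completion)

lemma sets_pair_lebesgue_order:
  "{p. snd p \<le> fst p} \<in> sets ((lebesgue :: real measure) \<Otimes>\<^sub>M lebesgue)"
  "{p. fst p \<le> snd p} \<in> sets ((lebesgue :: real measure) \<Otimes>\<^sub>M lebesgue)"
  "{p. fst p = snd p} \<in> sets ((lebesgue :: real measure) \<Otimes>\<^sub>M lebesgue)"
proof -
  have "{p \<in> space ((lebesgue :: real measure) \<Otimes>\<^sub>M lebesgue). snd p \<le> fst p} \<in> sets (lebesgue \<Otimes>\<^sub>M lebesgue)"
    by measurable
  moreover have "{p \<in> space ((lebesgue :: real measure) \<Otimes>\<^sub>M lebesgue). fst p \<le> snd p} \<in> sets (lebesgue \<Otimes>\<^sub>M lebesgue)"
    by measurable
  moreover have "{p \<in> space ((lebesgue :: real measure) \<Otimes>\<^sub>M lebesgue). fst p = snd p} \<in> sets (lebesgue \<Otimes>\<^sub>M lebesgue)"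
    by measurable
  ultimately show "{p. snd p \<le> fst p} \<in> sets ((lebesgue :: real measure) \<Otimes>\<^sub>M lebesgue)"
    "{p. fst p \<le> snd p} \<in> sets ((lebesgue :: real measure) \<Otimes>\<^sub>M lebesgue)"
    "{p. fst p = snd p} \<in> sets ((lebesgue :: real measure) \<Otimes>\<^sub>M lebesgue)"
    by (simp_all add: space_pair_measure)
qed

lemma lebesgue_integral_mult_split_triangle:
  fixes f g :: "real \<Rightarrow> real"
  assumes f: "integrable lebesgue (\<lambda>s. indicator {\<alpha>..\<beta>} s * f s)"
    and g: "integrable lebesgue (\<lambda>s. indicator {\<alpha>..\<beta>} s * g s)"
  shows "(\<integral>s. indicator {\<alpha>..\<beta>} s * f s * (\<integral>t. indicator {\<alpha>..s} t * g t \<partial>lebesgue) \<partial>lebesgue)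
       + (\<integral>t. indicator {\<alpha>..\<beta>} t * g t * (\<integral>s. indicator {\<alpha>..t} s * f s \<partial>lebesgue) \<partial>lebesgue)
       = (\<integral>s. indicator {\<alpha>..\<beta>} s * f s \<partial>lebesgue) * (\<integral>t. indicator {\<alpha>..\<beta>} t * g t \<partial>lebesgue)"
proof -
  define F where "F = (\<lambda>s. indicator {\<alpha>..\<beta>} s * f s)"
  define G where "G = (\<lambda>s. indicator {\<alpha>..\<beta>} s * g s)"
  have F_int: "integrable lebesgue F" and G_int: "integrable lebesgue G"
    using f g by (simp_all add: F_def G_def)
  then have [measurable]: "F \<in> borel_measurable lebesgue" "G \<in> borel_measurable lebesgue"
    by auto
  define K where "K T s t = indicator T (s, t) * (F s * G t)" for T s t
  have K_UNIV_int: "integrable (lebesgue \<Otimes>\<^sub>M lebesgue) (case_prod (K UNIV))"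
  proof (rule lebesgue_pair.Fubini_integrable)
    show "case_prod (K UNIV) \<in> borel_measurable (lebesgue \<Otimes>\<^sub>M lebesgue)"
      unfolding K_def by measurable
  qed (simp_all add: K_def abs_mult F_int G_int integrable_abs)
  have K_int: "integrable (lebesgue \<Otimes>\<^sub>M lebesgue) (case_prod (K T))"
    if "T \<in> sets (lebesgue \<Otimes>\<^sub>M lebesgue)" for T
    using integrable_mult_indicator[OF that K_UNIV_int] by (simp add: K_def case_prod_beta')
  define Lo Up Di where "Lo = {p :: real \<times> real. snd p \<le> fst p}"
    and "Up = {p :: real \<times> real. fst p \<le> snd p}" and "Di = {p :: real \<times> real. fst p = snd p}"
  note Lo_int = K_int[OF sets_pair_lebesgue_order(1), folded Lo_def]
  note Up_int = K_int[OF sets_pair_lebesgue_order(2), folded Up_def]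
  note Di_int = K_int[OF sets_pair_lebesgue_order(3), folded Di_def]
  have "case_prod (K UNIV) = (\<lambda>p. case_prod (K Lo) p + case_prod (K Up) p - case_prod (K Di) p)"
    by (auto simp: K_def Lo_def Up_def Di_def indicator_def fun_eq_iff)
  then have "integral\<^sup>L (lebesgue \<Otimes>\<^sub>M lebesgue) (case_prod (K UNIV))
      = integral\<^sup>L (lebesgue \<Otimes>\<^sub>M lebesgue) (case_prod (K Lo))
      + integral\<^sup>L (lebesgue \<Otimes>\<^sub>M lebesgue) (case_prod (K Up))
      - integral\<^sup>L (lebesgue \<Otimes>\<^sub>M lebesgue) (case_prod (K Di))"
    using Lo_int Up_int Di_int by simp
  moreover have "integral\<^sup>L (lebesgue \<Otimes>\<^sub>M lebesgue) (case_prod (K UNIV))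
      = integral\<^sup>L lebesgue F * integral\<^sup>L lebesgue G"
    using lebesgue_pair.integral_fst[OF K_UNIV_int] by (simp add: K_def[abs_def])
  moreover have "integral\<^sup>L (lebesgue \<Otimes>\<^sub>M lebesgue) (case_prod (K Lo))
      = (\<integral>s. F s * (\<integral>t. indicator {\<alpha>..s} t * g t \<partial>lebesgue) \<partial>lebesgue)"
    unfolding lebesgue_pair.integral_fst[OF Lo_int, symmetric]
  proof (rule Bochner_Integration.integral_cong[OF refl])
    fix s
    have "K Lo s = (\<lambda>t. F s * (indicator {\<alpha>..s} t * g t))"
      by (auto simp: Lo_def K_def F_def G_def indicator_def fun_eq_iff)
    then show "integral\<^sup>L lebesgue (K Lo s) = F s * (\<integral>t. indicator {\<alpha>..s} t * g t \<partial>lebesgue)"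
      by simp
  qed
  moreover have "integral\<^sup>L (lebesgue \<Otimes>\<^sub>M lebesgue) (case_prod (K Up))
      = (\<integral>t. G t * (\<integral>s. indicator {\<alpha>..t} s * f s \<partial>lebesgue) \<partial>lebesgue)"
    unfolding lebesgue_pair.integral_snd[OF Up_int, symmetric]
  proof (rule Bochner_Integration.integral_cong[OF refl])
    fix t
    have "(\<lambda>s. K Up s t) = (\<lambda>s. G t * (indicator {\<alpha>..t} s * f s))"
      by (auto simp: Up_def K_def F_def G_def indicator_def fun_eq_iff)
    then show "(\<integral>s. K Up s t \<partial>lebesgue) = G t * (\<integral>s. indicator {\<alpha>..t} s * f s \<partial>lebesgue)"
      by simp
  qed
  moreover have "integral\<^sup>L (lebesgue \<Otimes>\<^sub>M lebesgue) (case_prod (K Di)) = 0"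
    unfolding lebesgue_pair.integral_fst[OF Di_int, symmetric]
  proof (rule integral_eq_zero_AE, rule AE_I2)
    fix s :: real
    have "AE t in lebesgue. t \<noteq> s"
      by (rule AE_completion) (rule AE_lborel_singleton)
    then have "AE t in lebesgue. K Di s t = 0"
      by eventually_elim (simp add: K_def Di_def)
    then show "integral\<^sup>L lebesgue (K Di s) = 0"
      by (rule integral_eq_zero_AE)
  qed
  ultimately show ?thesis
    by (simp add: F_def G_def mult.assoc)
qed

lemma absolutely_integrable_continuous_mult:
  fixes h f :: "real \<Rightarrow> real"
  assumes "continuous_on {a..b} h" "f absolutely_integrable_on {a..b}"
  shows "(\<lambda>x. h x * f x) absolutely_integrable_on {a..b}"
proof (rule absolutely_integrable_bounded_measurable_product_real)
  show "h \<in> borel_measurable (lebesgue_on {a..b})"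
    using assms(1) by (simp add: continuous_imp_measurable_on_sets_lebesgue)
  show "bounded (h ` {a..b})"
    using assms(1) by (simp add: compact_continuous_image compact_imp_bounded)
qed (use assms in auto)

lemma lebesgue_integral_indicator_eq_integral:
  fixes f :: "real \<Rightarrow> real"
  assumes "f absolutely_integrable_on S"
  shows "(\<integral>x. indicator S x * f x \<partial>lebesgue) = integral S f"
  using set_lebesgue_integral_eq_integral(2)[OF assms] by (simp add: set_lebesgue_integral_def)

lemma integral_mult_split_triangle:
  fixes f g :: "real \<Rightarrow> real"
  assumes f: "f absolutely_integrable_on {\<alpha>..\<beta>}" and g: "g absolutely_integrable_on {\<alpha>..\<beta>}"
  shows "integral {\<alpha>..\<beta>} (\<lambda>s. integral {\<alpha>..s} g * f s) + integral {\<alpha>..\<beta>} (\<lambda>t. integral {\<alpha>..t} f * g t)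
       = integral {\<alpha>..\<beta>} f * integral {\<alpha>..\<beta>} g"
proof -
  have f_sub: "f absolutely_integrable_on {\<alpha>..s}" and g_sub: "g absolutely_integrable_on {\<alpha>..s}"
    if "s \<le> \<beta>" for s
    using absolutely_integrable_on_subinterval[OF f] absolutely_integrable_on_subinterval[OF g] that
    by auto
  have "continuous_on {\<alpha>..\<beta>} (\<lambda>s. integral {\<alpha>..s} g)" "continuous_on {\<alpha>..\<beta>} (\<lambda>s. integral {\<alpha>..s} f)"
    using f g set_lebesgue_integral_eq_integral(1) by (blast intro: indefinite_integral_continuous_1)+
  then have fG: "(\<lambda>s. integral {\<alpha>..s} g * f s) absolutely_integrable_on {\<alpha>..\<beta>}"
    and gF: "(\<lambda>t. integral {\<alpha>..t} f * g t) absolutely_integrable_on {\<alpha>..\<beta>}"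
    using f g absolutely_integrable_continuous_mult by blast+
  have "integral {\<alpha>..\<beta>} (\<lambda>s. integral {\<alpha>..s} g * f s)
      = (\<integral>s. indicator {\<alpha>..\<beta>} s * f s * (\<integral>t. indicator {\<alpha>..s} t * g t \<partial>lebesgue) \<partial>lebesgue)"
    unfolding lebesgue_integral_indicator_eq_integral[OF fG, symmetric]
  proof (rule Bochner_Integration.integral_cong[OF refl])
    fix s
    show "indicator {\<alpha>..\<beta>} s * (integral {\<alpha>..s} g * f s)
        = indicator {\<alpha>..\<beta>} s * f s * (\<integral>t. indicator {\<alpha>..s} t * g t \<partial>lebesgue)"
      by (cases "s \<in> {\<alpha>..\<beta>}") (auto simp: lebesgue_integral_indicator_eq_integral[OF g_sub])
  qed
  moreover have "integral {\<alpha>..\<beta>} (\<lambda>t. integral {\<alpha>..t} f * g t)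
      = (\<integral>t. indicator {\<alpha>..\<beta>} t * g t * (\<integral>s. indicator {\<alpha>..t} s * f s \<partial>lebesgue) \<partial>lebesgue)"
    unfolding lebesgue_integral_indicator_eq_integral[OF gF, symmetric]
  proof (rule Bochner_Integration.integral_cong[OF refl])
    fix t
    show "indicator {\<alpha>..\<beta>} t * (integral {\<alpha>..t} f * g t)
        = indicator {\<alpha>..\<beta>} t * g t * (\<integral>s. indicator {\<alpha>..t} s * f s \<partial>lebesgue)"
      by (cases "t \<in> {\<alpha>..\<beta>}") (auto simp: lebesgue_integral_indicator_eq_integral[OF f_sub])
  qed
  ultimately show ?thesis
    using lebesgue_integral_mult_split_triangle[of \<alpha> \<beta> f g] f g
    by (simp add: lebesgue_integral_indicator_eq_integral set_integrable_def)
qed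


section \<open>Absolutely continuous functions and weak derivatives\<close>

definition AC_with_deriv :: "(real \<Rightarrow> real) \<Rightarrow> (real \<Rightarrow> real) \<Rightarrow> bool" where
  "AC_with_deriv F f \<longleftrightarrow> f absolutely_integrable_on {0..1}
     \<and> (\<forall>t\<in>{0..1}. F t = F 0 + integral {0..t} f)"

lemma AC_with_deriv_D:
  assumes "AC_with_deriv F f"
  shows "f absolutely_integrable_on {0..1}" and "t \<in> {0..1} \<Longrightarrow> F t = F 0 + integral {0..t} f"
  using assms unfolding AC_with_deriv_def by blast+

lemma absolutely_integrable_imp_integrable_subinterval:
  fixes f :: "real \<Rightarrow> real"
  assumes "f absolutely_integrable_on {a..b}" "a \<le> c" "d \<le> b"
  shows "f integrable_on {c..d}"
proof -
  have "f absolutely_integrable_on {c..d}"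
    by (rule absolutely_integrable_on_subinterval[OF assms(1)]) (use assms(2,3) in auto)
  then show ?thesis by (rule set_lebesgue_integral_eq_integral(1))
qed

lemma AC_with_deriv_continuous:
  assumes "AC_with_deriv F f"
  shows "continuous_on {0..1} F"
proof -
  have "f integrable_on {0..1}"
    by (rule set_lebesgue_integral_eq_integral(1)[OF AC_with_deriv_D(1)[OF assms]])
  then have "continuous_on {0..1} (\<lambda>t. F 0 + integral {0..t} f)"
    by (intro continuous_intros indefinite_integral_continuous_1)
  then show ?thesis
    by (rule continuous_on_eq) (simp add: AC_with_deriv_D(2)[OF assms, symmetric])
qed

lemma integral_product_of_primitives:
  fixes f g :: "real \<Rightarrow> real"
  assumes f: "f absolutely_integrable_on {\<alpha>..\<beta>}" and g: "g absolutely_integrable_on {\<alpha>..\<beta>}"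
  shows "integral {\<alpha>..\<beta>} (\<lambda>s. f s * (c + integral {\<alpha>..s} g) + (b + integral {\<alpha>..s} f) * g s)
       = (b + integral {\<alpha>..\<beta>} f) * (c + integral {\<alpha>..\<beta>} g) - b * c"
proof -
  have f_int: "f integrable_on {\<alpha>..\<beta>}" and g_int: "g integrable_on {\<alpha>..\<beta>}"
    using set_lebesgue_integral_eq_integral(1) f g by blast+
  have fG: "(\<lambda>s. integral {\<alpha>..s} g * f s) integrable_on {\<alpha>..\<beta>}"
    by (rule set_lebesgue_integral_eq_integral(1)[OF absolutely_integrable_continuous_mult[OF
          indefinite_integral_continuous_1[OF g_int] f]])
  have gF: "(\<lambda>s. integral {\<alpha>..s} f * g s) integrable_on {\<alpha>..\<beta>}"
    by (rule set_lebesgue_integral_eq_integral(1)[OF absolutely_integrable_continuous_mult[OF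
          indefinite_integral_continuous_1[OF f_int] g]])
  have "integral {\<alpha>..\<beta>} (\<lambda>s. f s * (c + integral {\<alpha>..s} g) + (b + integral {\<alpha>..s} f) * g s)
      = integral {\<alpha>..\<beta>} (\<lambda>s. c * f s + b * g s + (integral {\<alpha>..s} g * f s + integral {\<alpha>..s} f * g s))"
    by (simp add: algebra_simps)
  also have "\<dots> = c * integral {\<alpha>..\<beta>} f + b * integral {\<alpha>..\<beta>} g
      + (integral {\<alpha>..\<beta>} (\<lambda>s. integral {\<alpha>..s} g * f s) + integral {\<alpha>..\<beta>} (\<lambda>s. integral {\<alpha>..s} f * g s))"
    by (intro integral_unique has_integral_add has_integral_mult_right integrable_integral
        f_int g_int fG gF)
  also have "\<dots> = c * integral {\<alpha>..\<beta>} f + b * integral {\<alpha>..\<beta>} g + integral {\<alpha>..\<beta>} f * integral {\<alpha>..\<beta>} g"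
    by (simp only: integral_mult_split_triangle[OF f g])
  also have "\<dots> = (b + integral {\<alpha>..\<beta>} f) * (c + integral {\<alpha>..\<beta>} g) - b * c"
    by (simp add: algebra_simps)
  finally show ?thesis .
qed

lemma AC_with_deriv_mult:
  assumes F: "AC_with_deriv F f" and G: "AC_with_deriv G g"
  shows "AC_with_deriv (\<lambda>t. F t * G t) (\<lambda>t. f t * G t + F t * g t)"
  unfolding AC_with_deriv_def
proof (intro conjI ballI)
  have f: "f absolutely_integrable_on {0..1}" and g: "g absolutely_integrable_on {0..1}"
    using AC_with_deriv_D(1)[OF F] AC_with_deriv_D(1)[OF G] .
  have "(\<lambda>t. G t * f t) absolutely_integrable_on {0..1}"
    by (rule absolutely_integrable_continuous_mult[OF AC_with_deriv_continuous[OF G] f])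
  then have "(\<lambda>t. f t * G t) absolutely_integrable_on {0..1}"
    by (simp only: mult.commute)
  moreover have "(\<lambda>t. F t * g t) absolutely_integrable_on {0..1}"
    by (rule absolutely_integrable_continuous_mult[OF AC_with_deriv_continuous[OF F] g])
  ultimately show "(\<lambda>t. f t * G t + F t * g t) absolutely_integrable_on {0..1}"
    by (rule set_integral_add(1))
  fix t :: real
  assume t: "t \<in> {0..1}"
  have "integral {0..t} (\<lambda>s. f s * G s + F s * g s)
      = integral {0..t} (\<lambda>s. f s * (G 0 + integral {0..s} g) + (F 0 + integral {0..s} f) * g s)"
    by (rule integral_cong)
       (use t in \<open>simp add: AC_with_deriv_D(2)[OF F, symmetric] AC_with_deriv_D(2)[OF G, symmetric]\<close>)
  also have "\<dots> = (F 0 + integral {0..t} f) * (G 0 + integral {0..t} g) - F 0 * G 0"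
    by (rule integral_product_of_primitives; rule absolutely_integrable_on_subinterval)
       (use f g t in auto)
  also have "\<dots> = F t * G t - F 0 * G 0"
    using AC_with_deriv_D(2)[OF F t] AC_with_deriv_D(2)[OF G t] by simp
  finally show "F t * G t = F 0 * G 0 + integral {0..t} (\<lambda>s. f s * G s + F s * g s)"
    by simp
qed

lemma AC_with_deriv_C1:
  assumes "\<And>x. DERIV F x :> F' x" and "continuous_on {0..1} F'"
  shows "AC_with_deriv F F'"
  unfolding AC_with_deriv_def
proof (intro conjI ballI)
  show "F' absolutely_integrable_on {0..1}"
    by (rule absolutely_integrable_continuous_real[OF assms(2)])
  fix t :: real
  assume "t \<in> {0..1}"
  then have "(F' has_integral (F t - F 0)) {0..t}"
    using assms(1) by (intro fundamental_theorem_of_calculus)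
      (auto simp: has_real_derivative_iff_has_vector_derivative[symmetric]
        intro: has_field_derivative_at_within)
  then show "F t = F 0 + integral {0..t} F'"
    by (simp add: integral_unique)
qed

lemma test_fun_deriv:
  assumes "test_fun \<phi>"
  shows "DERIV \<phi> x :> deriv \<phi> x" and "continuous_on S (deriv \<phi>)" and "\<phi> 0 = 0" and "\<phi> 1 = 0"
proof -
  have "\<phi> differentiable (at x)" for x
    using assms unfolding test_fun_def by (metis funpow_0)
  then show "DERIV \<phi> x :> deriv \<phi> x"
    using DERIV_deriv_iff_real_differentiable by blast
  have "deriv \<phi> differentiable (at x)" for x
    using assms unfolding test_fun_def by (metis funpow_0 funpow_Suc_right o_apply)
  then show "continuous_on S (deriv \<phi>)"
    by (simp add: continuous_at_imp_continuous_on differentiable_imp_continuous_within)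
  obtain c d where "0 < c" "d < 1" "\<forall>x. x \<notin> {c..d} \<longrightarrow> \<phi> x = 0"
    using assms unfolding test_fun_def by blast
  then show "\<phi> 0 = 0" "\<phi> 1 = 0" by auto
qed

lemma AC_with_deriv_imp_weak_deriv:
  assumes H: "AC_with_deriv H h"
  shows "weak_deriv H h"
  unfolding weak_deriv_def
proof (intro conjI allI impI)
  have cH: "continuous_on {0..1} H" by (rule AC_with_deriv_continuous[OF H])
  then show "set_integrable lebesgue {0..1} H"
    by (rule absolutely_integrable_continuous_real)
  show h: "set_integrable lebesgue {0..1} h"
    by (rule AC_with_deriv_D(1)[OF H])
  fix \<phi> assume \<phi>: "test_fun \<phi>"
  have cP: "continuous_on {0..1} (deriv \<phi>)" by (rule test_fun_deriv(2)[OF \<phi>])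
  have "AC_with_deriv \<phi> (deriv \<phi>)"
    by (rule AC_with_deriv_C1[OF test_fun_deriv(1)[OF \<phi>] cP])
  from AC_with_deriv_mult[OF H this]
  have "H 1 * \<phi> 1 = H 0 * \<phi> 0 + integral {0..1} (\<lambda>t. h t * \<phi> t + H t * deriv \<phi> t)"
    by (rule AC_with_deriv_D(2)) simp
  then have sum_zero: "integral {0..1} (\<lambda>t. h t * \<phi> t + H t * deriv \<phi> t) = 0"
    using test_fun_deriv(3,4)[OF \<phi>] by simp
  have "continuous_on {0..1} \<phi>"
    using test_fun_deriv(1)[OF \<phi>] by (meson DERIV_isCont continuous_at_imp_continuous_on)
  then have h\<phi>: "(\<lambda>t. h t * \<phi> t) absolutely_integrable_on {0..1}"
    using absolutely_integrable_continuous_mult[OF _ h] by (simp add: mult.commute)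
  have H\<phi>: "(\<lambda>t. H t * deriv \<phi> t) absolutely_integrable_on {0..1}"
    by (rule absolutely_integrable_continuous_real) (intro continuous_intros cH cP)
  show "(LINT x:{0..1}|lebesgue. H x * deriv \<phi> x) = - (LINT x:{0..1}|lebesgue. h x * \<phi> x)"
    using sum_zero set_lebesgue_integral_eq_integral[OF h\<phi>] set_lebesgue_integral_eq_integral[OF H\<phi>]
    by (simp add: integral_add)
qed


section \<open>Smooth plateau functions\<close>

primrec k_differentiable :: "nat \<Rightarrow> (real \<Rightarrow> real) \<Rightarrow> bool" where
  "k_differentiable 0 f = True"
| "k_differentiable (Suc k) f = (\<exists>f'. (\<forall>x. DERIV f x :> f' x) \<and> k_differentiable k f')"

definition smooth :: "(real \<Rightarrow> real) \<Rightarrow> bool" where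
  "smooth f \<longleftrightarrow> (\<forall>k. k_differentiable k f)"

lemma k_differentiable_SucD: "k_differentiable (Suc k) f \<Longrightarrow> k_differentiable k f"
proof (induction k arbitrary: f)
  case (Suc k)
  then obtain f' where "\<forall>x. DERIV f x :> f' x" "k_differentiable (Suc k) f'" by auto
  then show ?case using Suc.IH by auto
qed simp

lemma k_differentiable_const: "k_differentiable k (\<lambda>x. c)"
  by (induction k arbitrary: c) (auto intro!: exI[of _ "\<lambda>x. 0"])

lemma k_differentiable_add: "k_differentiable k f \<Longrightarrow> k_differentiable k g \<Longrightarrow> k_differentiable k (\<lambda>x. f x + g x)"
proof (induction k arbitrary: f g)
  case (Suc k)
  then obtain f' g' where "\<forall>x. DERIV f x :> f' x" "k_differentiable k f'" "\<forall>x. DERIV g x :> g' x" "k_differentiable k g'"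
    by auto
  then show ?case
    using Suc.IH by (auto intro!: exI[of _ "\<lambda>x. f' x + g' x"] derivative_eq_intros)
qed simp

lemma k_differentiable_mult: "k_differentiable k f \<Longrightarrow> k_differentiable k g \<Longrightarrow> k_differentiable k (\<lambda>x. f x * g x)"
proof (induction k arbitrary: f g)
  case (Suc k)
  then obtain f' g' where d: "\<forall>x. DERIV f x :> f' x" "k_differentiable k f'" "\<forall>x. DERIV g x :> g' x" "k_differentiable k g'"
    by auto
  have "k_differentiable k f" "k_differentiable k g" using Suc.prems k_differentiable_SucD by auto
  then have "k_differentiable k (\<lambda>x. f' x * g x + f x * g' x)"
    using Suc.IH d k_differentiable_add by blast
  moreover have "\<forall>x. DERIV (\<lambda>x. f x * g x) x :> f' x * g x + f x * g' x"
    using d by (auto intro!: derivative_eq_intros)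
  ultimately show ?case by auto
qed simp

lemma k_differentiable_inverse: "k_differentiable k f \<Longrightarrow> (\<And>x. f x \<noteq> 0) \<Longrightarrow> k_differentiable k (\<lambda>x. inverse (f x))"
proof (induction k arbitrary: f)
  case (Suc k)
  then obtain f' where d: "\<forall>x. DERIV f x :> f' x" "k_differentiable k f'" by auto
  have "k_differentiable k f" using Suc.prems k_differentiable_SucD by auto
  then have inv: "k_differentiable k (\<lambda>x. inverse (f x))" using Suc.IH Suc.prems by blast
  have "k_differentiable k (\<lambda>x. - f' x * (inverse (f x) * inverse (f x)))"
    using k_differentiable_mult[OF k_differentiable_mult[OF k_differentiable_const[of k "-1"] d(2)] k_differentiable_mult[OF inv inv]] by simp
  moreover have "\<forall>x. DERIV (\<lambda>x. inverse (f x)) x :> - f' x * (inverse (f x) * inverse (f x))"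
    using d Suc.prems by (auto intro!: derivative_eq_intros simp: power2_eq_square)
  ultimately show ?case by auto
qed simp

lemma k_differentiable_affine: "k_differentiable k f \<Longrightarrow> k_differentiable k (\<lambda>x. f (c * x + d))"
proof (induction k arbitrary: f)
  case (Suc k)
  then obtain f' where d: "\<forall>x. DERIV f x :> f' x" "k_differentiable k f'" by auto
  have "k_differentiable k (\<lambda>x. c * f' (c * x + d))"
    using k_differentiable_mult[OF k_differentiable_const Suc.IH[OF d(2)]] .
  moreover have "DERIV (\<lambda>x. f (c * x + d)) x :> c * f' (c * x + d)" for x
  proof -
    have "DERIV (\<lambda>x. c * x + d) x :> c" by (auto intro!: derivative_eq_intros)
    from DERIV_chain2[OF d(1)[rule_format] this] show ?thesis by (simp add: mult.commute)
  qed
  ultimately show ?case by (auto intro!: exI[of _ "\<lambda>x. c * f' (c * x + d)"])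
qed simp

lemma smooth_deriv:
  assumes "smooth f"
  shows "DERIV f x :> deriv f x" and "smooth (deriv f)"
proof -
  obtain f' where f': "\<forall>x. DERIV f x :> f' x"
    using assms unfolding smooth_def by (metis k_differentiable.simps(2))
  then have deriv_f: "deriv f = f'" by (auto intro!: ext DERIV_imp_deriv)
  then show "DERIV f x :> deriv f x" using f' by simp
  show "smooth (deriv f)" unfolding smooth_def
  proof
    fix k
    obtain f2 where "\<forall>x. DERIV f x :> f2 x" "k_differentiable k f2"
      using assms unfolding smooth_def by (metis k_differentiable.simps(2))
    moreover from this(1) have "f2 = f'" using f' by (auto intro!: ext DERIV_unique)
    ultimately show "k_differentiable k (deriv f)" using deriv_f by simp
  qed
qed

lemma smooth_higher_deriv_differentiable: "smooth f \<Longrightarrow> (deriv ^^ n) f differentiable (at x)"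
proof (induction n arbitrary: f)
  case 0
  then show ?case using smooth_deriv(1) real_differentiable_def by auto
next
  case (Suc n)
  have "(deriv ^^ Suc n) f = (deriv ^^ n) (deriv f)" by (simp add: funpow_swap1)
  then show ?case using Suc.IH smooth_deriv(2)[OF Suc.prems] by simp
qed

definition flat_poly :: "real poly \<Rightarrow> real \<Rightarrow> real" where
  "flat_poly P t = (if t > 0 then poly P (inverse t) * exp (- inverse t) else 0)"

text \<open>On t > 0 the derivative of P(1/t) exp(-1/t) is (X^2 (P - P'))(1/t) exp(-1/t), so the
  family flat_poly is closed under differentiation; at 0 every member is flat.\<close>

definition flat_poly_deriv :: "real poly \<Rightarrow> real poly" where
  "flat_poly_deriv P = [:0, 0, 1:] * (P - pderiv P)"

lemma tendsto_poly_times_exp_neg_at_top: "((\<lambda>y. poly R y * exp (- y)) \<longlongrightarrow> 0) at_top"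
  for R :: "real poly"
proof -
  have "((\<lambda>y. \<Sum>i\<le>degree R. coeff R i * (y ^ i / exp y)) \<longlongrightarrow> (\<Sum>i\<le>degree R. coeff R i * 0)) at_top"
    by (intro tendsto_sum tendsto_mult tendsto_const tendsto_power_div_exp_0)
  moreover have "(\<Sum>i\<le>degree R. coeff R i * (y ^ i / exp y)) = poly R y * exp (- y)" for y
    by (simp add: poly_altdef sum_distrib_right exp_minus divide_inverse mult.assoc)
  ultimately show ?thesis by simp
qed

lemma flat_poly_has_deriv_pos:
  assumes "t > 0"
  shows "DERIV (flat_poly P) t :> flat_poly (flat_poly_deriv P) t"
proof -
  have "DERIV (\<lambda>t. poly P (inverse t) * exp (- inverse t)) t :>
     poly (pderiv P) (inverse t) * (- (inverse t ^ 2)) * exp (- inverse t)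
      + exp (- inverse t) * (inverse t ^ 2) * poly P (inverse t)"
    using DERIV_mult[OF DERIV_chain2[OF poly_DERIV DERIV_inverse[of t UNIV]]
        DERIV_chain2[OF DERIV_exp DERIV_minus[OF DERIV_inverse[of t UNIV]]]] assms
    by (simp add: numeral_2_eq_2)
  also have "poly (pderiv P) (inverse t) * (- (inverse t ^ 2)) * exp (- inverse t)
      + exp (- inverse t) * (inverse t ^ 2) * poly P (inverse t) = flat_poly (flat_poly_deriv P) t"
    using assms by (simp add: flat_poly_def flat_poly_deriv_def algebra_simps power2_eq_square)
  finally show ?thesis
    by (rule has_field_derivative_transform_within_open[of _ _ _ "{0<..}"])
       (use assms in \<open>auto simp: flat_poly_def\<close>)
qed

lemma flat_poly_has_deriv_zero: "DERIV (flat_poly P) 0 :> 0"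
  unfolding DERIV_def
proof (rule filterlim_split_at)
  have "eventually (\<lambda>h. 0 = (flat_poly P (0 + h) - flat_poly P 0) / h) (at_left (0::real))"
    by (auto simp: eventually_at_filter flat_poly_def)
  then show "((\<lambda>h. (flat_poly P (0 + h) - flat_poly P 0) / h) \<longlongrightarrow> 0) (at_left 0)"
    by (rule Lim_transform_eventually[OF tendsto_const])
  have "eventually (\<lambda>y. poly ([:0, 1:] * P) y * exp (- y)
      = (flat_poly P (0 + inverse y) - flat_poly P 0) / inverse y) at_top"
    using eventually_gt_at_top[of 0] by eventually_elim (simp add: flat_poly_def divide_inverse)
  then have "((\<lambda>y. (flat_poly P (0 + inverse y) - flat_poly P 0) / inverse y) \<longlongrightarrow> 0) at_top"
    by (rule Lim_transform_eventually[OF tendsto_poly_times_exp_neg_at_top])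
  then show "((\<lambda>h. (flat_poly P (0 + h) - flat_poly P 0) / h) \<longlongrightarrow> 0) (at_right 0)"
    unfolding filterlim_at_right_to_top .
qed

lemma flat_poly_has_deriv: "DERIV (flat_poly P) t :> flat_poly (flat_poly_deriv P) t"
proof -
  consider "t > 0" | "t < 0" | "t = 0" by linarith
  then show ?thesis
  proof cases
    case 1
    then show ?thesis by (rule flat_poly_has_deriv_pos)
  next
    case 2
    have "DERIV (flat_poly P) t :> 0"
      by (rule has_field_derivative_transform_within_open[of "\<lambda>t. 0" _ _ "{..<0}"])
         (use 2 in \<open>auto simp: flat_poly_def\<close>)
    then show ?thesis using 2 by (simp add: flat_poly_def)
  next
    case 3
    then show ?thesis using flat_poly_has_deriv_zero by (simp add: flat_poly_def)
  qed
qed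

lemma smooth_flat_poly: "smooth (flat_poly P)"
  unfolding smooth_def
proof
  show "k_differentiable k (flat_poly P)" for k
    by (induction k arbitrary: P) (use flat_poly_has_deriv in auto)
qed

definition flat :: "real \<Rightarrow> real" where "flat = flat_poly 1"
definition flat' :: "real \<Rightarrow> real" where "flat' = flat_poly (flat_poly_deriv 1)"

lemma flat_has_deriv: "DERIV flat t :> flat' t"
  unfolding flat_def flat'_def by (rule flat_poly_has_deriv)

lemma flat_pos: "t > 0 \<Longrightarrow> flat t > 0"
  and flat_nonpos_eq_0: "t \<le> 0 \<Longrightarrow> flat t = 0"
  and flat_nonneg: "flat t \<ge> 0"
  and flat'_nonpos_eq_0: "t \<le> 0 \<Longrightarrow> flat' t = 0"
  and flat'_nonneg: "flat' t \<ge> 0"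
  by (simp_all add: flat_def flat'_def flat_poly_def flat_poly_deriv_def)

definition smooth_step :: "real \<Rightarrow> real" where
  "smooth_step t = flat t / (flat t + flat (1 - t))"

definition smooth_step' :: "real \<Rightarrow> real" where
  "smooth_step' t = (flat' t * flat (1 - t) + flat t * flat' (1 - t)) / (flat t + flat (1 - t))^2"

lemma flat_step_denom_pos: "flat t + flat (1 - t) > 0"
  using flat_pos[of t] flat_pos[of "1 - t"] flat_nonneg[of t] flat_nonneg[of "1 - t"]
  by (cases "t > 0") auto

lemma smooth_smooth_step: "smooth smooth_step"
  unfolding smooth_def
proof
  fix k
  have "k_differentiable k flat" using smooth_flat_poly by (simp add: smooth_def flat_def)
  moreover from this have "k_differentiable k (\<lambda>t. flat (1 - t))"
    using k_differentiable_affine[of k flat "-1" 1] by simp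
  ultimately have "k_differentiable k (\<lambda>t. flat t * inverse (flat t + flat (1 - t)))"
    using flat_step_denom_pos
    by (intro k_differentiable_mult k_differentiable_inverse k_differentiable_add)
       (auto simp: less_imp_neq[symmetric])
  then show "k_differentiable k smooth_step"
    by (simp add: smooth_step_def[abs_def] divide_inverse)
qed

lemma smooth_step_has_deriv: "DERIV smooth_step t :> smooth_step' t"
proof -
  have "DERIV (\<lambda>t. flat (1 - t)) t :> flat' (1 - t) * (- 1)"
    by (rule DERIV_chain2[OF flat_has_deriv]) (auto intro!: derivative_eq_intros)
  then have "DERIV smooth_step t :> (flat' t * (flat t + flat (1 - t)) - flat t * (flat' t + flat' (1 - t) * (- 1)))
      / ((flat t + flat (1 - t)) * (flat t + flat (1 - t)))"
    unfolding smooth_step_def[abs_def]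
    by (intro DERIV_divide DERIV_add flat_has_deriv) (use flat_step_denom_pos[of t] in simp_all)
  then show ?thesis
    by (simp add: smooth_step'_def algebra_simps power2_eq_square)
qed

lemma smooth_step_nonpos_eq_0: "t \<le> 0 \<Longrightarrow> smooth_step t = 0"
  by (simp add: smooth_step_def flat_nonpos_eq_0)

lemma smooth_step_ge1_eq_1: "t \<ge> 1 \<Longrightarrow> smooth_step t = 1"
  using flat_pos[of t] flat_nonpos_eq_0[of "1 - t"] by (simp add: smooth_step_def)

lemma smooth_step_bounds: "0 \<le> smooth_step t" "smooth_step t \<le> 1"
  using flat_nonneg[of t] flat_nonneg[of "1 - t"] flat_step_denom_pos[of t]
  by (simp_all add: smooth_step_def field_simps)

lemma smooth_step'_nonneg: "smooth_step' t \<ge> 0"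
  using flat_nonneg[of t] flat_nonneg[of "1 - t"] flat'_nonneg[of t] flat'_nonneg[of "1 - t"]
  by (simp add: smooth_step'_def)

lemma smooth_step'_outside_eq_0: "t \<le> 0 \<or> t \<ge> 1 \<Longrightarrow> smooth_step' t = 0"
  using flat_nonpos_eq_0[of t] flat'_nonpos_eq_0[of t] flat_nonpos_eq_0[of "1 - t"]
    flat'_nonpos_eq_0[of "1 - t"]
  by (auto simp: smooth_step'_def)

lemma smooth_step_mono: "s \<le> t \<Longrightarrow> smooth_step s \<le> smooth_step t"
  by (rule DERIV_nonneg_imp_nondecreasing[of s t smooth_step])
     (use smooth_step_has_deriv smooth_step'_nonneg in blast)+

lemma isCont_smooth_step': "isCont smooth_step' t"
proof -
  have "deriv smooth_step = smooth_step'"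
    using smooth_step_has_deriv by (auto intro!: ext DERIV_imp_deriv)
  then have "DERIV smooth_step' t :> deriv smooth_step' t"
    using smooth_deriv[OF smooth_deriv(2)[OF smooth_smooth_step]] by metis
  then show ?thesis by (rule DERIV_isCont)
qed


definition mollifier :: "real \<Rightarrow> real \<Rightarrow> real \<Rightarrow> real" where
  "mollifier z \<epsilon> t = smooth_step' ((t - z) / \<epsilon>) / \<epsilon>"

definition plateau :: "real \<Rightarrow> real \<Rightarrow> real \<Rightarrow> real \<Rightarrow> real" where
  "plateau x y \<epsilon> t = smooth_step ((t - x) / \<epsilon>) - smooth_step ((t - y) / \<epsilon>)"

lemma smooth_step_scaled_has_deriv:
  assumes "\<epsilon> > 0"
  shows "DERIV (\<lambda>t. smooth_step ((t - z) / \<epsilon>)) t :> mollifier z \<epsilon> t"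
proof -
  have "DERIV (\<lambda>t. (t - z) / \<epsilon>) t :> 1 / \<epsilon>"
    using assms by (auto intro!: derivative_eq_intros)
  from DERIV_chain2[OF smooth_step_has_deriv this] show ?thesis
    by (simp add: mollifier_def)
qed

lemma mollifier_nonneg: "\<epsilon> > 0 \<Longrightarrow> mollifier z \<epsilon> t \<ge> 0"
  using smooth_step'_nonneg by (simp add: mollifier_def)

lemma mollifier_outside_eq_0:
  assumes "\<epsilon> > 0" and "t \<notin> {z..z + \<epsilon>}"
  shows "mollifier z \<epsilon> t = 0"
proof -
  have "(t - z) / \<epsilon> \<le> 0 \<or> (t - z) / \<epsilon> \<ge> 1"
    using assms by (auto simp: divide_le_0_iff le_divide_eq)
  then show ?thesis by (simp add: mollifier_def smooth_step'_outside_eq_0)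
qed

lemma continuous_on_mollifier:
  assumes "\<epsilon> > 0"
  shows "continuous_on S (mollifier z \<epsilon>)"
proof -
  have "continuous_on UNIV smooth_step'"
    by (simp add: continuous_at_imp_continuous_on isCont_smooth_step')
  then have "continuous_on S (\<lambda>t. smooth_step' ((t - z) / \<epsilon>))"
    by (rule continuous_on_compose2) (use assms in \<open>auto intro!: continuous_intros\<close>)
  then show ?thesis
    unfolding mollifier_def[abs_def] using assms by (intro continuous_intros) auto
qed

lemma has_integral_mollifier:
  assumes "\<epsilon> > 0"
  shows "(mollifier z \<epsilon> has_integral 1) {z..z + \<epsilon>}"
proof -
  have "(mollifier z \<epsilon> has_integral
      (smooth_step ((z + \<epsilon> - z) / \<epsilon>) - smooth_step ((z - z) / \<epsilon>))) {z..z + \<epsilon>}"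
  proof (rule fundamental_theorem_of_calculus[of _ _ "\<lambda>t. smooth_step ((t - z) / \<epsilon>)"])
    fix t
    show "((\<lambda>t. smooth_step ((t - z) / \<epsilon>)) has_vector_derivative mollifier z \<epsilon> t)
        (at t within {z..z + \<epsilon>})"
      using smooth_step_scaled_has_deriv[OF assms, of z t]
      by (simp add: has_real_derivative_iff_has_vector_derivative[symmetric] has_field_derivative_at_within)
  qed (use assms in simp)
  then show ?thesis
    using assms by (simp add: smooth_step_ge1_eq_1 smooth_step_nonpos_eq_0)
qed


lemma integral_mollifier_approx:
  fixes u :: "real \<Rightarrow> real"
  assumes u: "continuous_on {0..1} u" and \<epsilon>: "\<epsilon> > 0" and z: "0 \<le> z" "z + \<epsilon> \<le> 1"
    and close: "\<And>t. t \<in> {z..z + \<epsilon>} \<Longrightarrow> \<bar>u t - u z\<bar> \<le> \<eta>"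
  shows "\<bar>integral {0..1} (\<lambda>t. u t * mollifier z \<epsilon> t) - u z\<bar> \<le> \<eta>"
proof -
  let ?k = "mollifier z \<epsilon>"
  have sub: "{z..z + \<epsilon>} \<subseteq> {0..1}" using z by auto
  have u_sub: "continuous_on {z..z + \<epsilon>} u" using continuous_on_subset[OF u sub] .
  have uk: "(\<lambda>t. u t * ?k t) integrable_on {z..z + \<epsilon>}"
    by (intro integrable_continuous_real continuous_intros u_sub continuous_on_mollifier[OF \<epsilon>])
  have k: "?k integrable_on {z..z + \<epsilon>}" "integral {z..z + \<epsilon>} ?k = 1"
    using has_integral_mollifier[OF \<epsilon>] by (auto simp: integral_unique)
  have "integral {0..1} (\<lambda>t. u t * ?k t) = integral {z..z + \<epsilon>} (\<lambda>t. u t * ?k t)"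
    using has_integral_on_superset[OF integrable_integral[OF uk] _ sub] \<epsilon>
    by (simp add: integral_unique mollifier_outside_eq_0)
  also have "\<dots> - u z = integral {z..z + \<epsilon>} (\<lambda>t. (u t - u z) * ?k t)"
    using integral_diff[OF uk integrable_on_cmult_left[OF k(1), of "u z"]] k(2)
    by (simp add: algebra_simps)
  finally have "integral {0..1} (\<lambda>t. u t * ?k t) - u z = integral {z..z + \<epsilon>} (\<lambda>t. (u t - u z) * ?k t)" .
  also have "norm \<dots> \<le> integral {z..z + \<epsilon>} (\<lambda>t. \<eta> * ?k t)"
  proof (rule Henstock_Kurzweil_Integration.integral_norm_bound_integral)
    show "(\<lambda>t. (u t - u z) * ?k t) integrable_on {z..z + \<epsilon>}"
      by (intro integrable_continuous_real continuous_intros u_sub continuous_on_mollifier[OF \<epsilon>])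
    show "(\<lambda>t. \<eta> * ?k t) integrable_on {z..z + \<epsilon>}"
      using integrable_on_cmult_left[OF k(1)] by simp
    show "norm ((u t - u z) * ?k t) \<le> \<eta> * ?k t" if "t \<in> {z..z + \<epsilon>}" for t
      using close[OF that] mollifier_nonneg[OF \<epsilon>, of z t] by (simp add: abs_mult mult_right_mono)
  qed
  also have "\<dots> = \<eta>" using k(2) by simp
  finally show ?thesis by simp
qed

lemma smooth_plateau:
  assumes "\<epsilon> > 0"
  shows "smooth (plateau x y \<epsilon>)"
  unfolding smooth_def
proof
  fix k
  have scaled: "k_differentiable k (\<lambda>t. smooth_step ((t - z) / \<epsilon>))" for z
    using k_differentiable_affine[of k smooth_step "1 / \<epsilon>" "- z / \<epsilon>"] smooth_smooth_step
    by (simp add: smooth_def diff_divide_distrib)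
  have "k_differentiable k (\<lambda>t. smooth_step ((t - x) / \<epsilon>) + (- 1) * smooth_step ((t - y) / \<epsilon>))"
    by (intro k_differentiable_add k_differentiable_mult k_differentiable_const scaled)
  then show "k_differentiable k (plateau x y \<epsilon>)"
    by (simp add: plateau_def[abs_def])
qed

lemma plateau_outside_eq_0:
  assumes "\<epsilon> > 0" "x \<le> y" "t \<le> x \<or> t \<ge> y + \<epsilon>"
  shows "plateau x y \<epsilon> t = 0"
proof (cases "t \<le> x")
  case True
  then have "(t - x) / \<epsilon> \<le> 0" "(t - y) / \<epsilon> \<le> 0"
    using assms by (auto simp: divide_le_0_iff)
  then show ?thesis by (simp add: plateau_def smooth_step_nonpos_eq_0)
next
  case False
  then have "(t - x) / \<epsilon> \<ge> 1" "(t - y) / \<epsilon> \<ge> 1"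
    using assms by (auto simp: le_divide_eq)
  then show ?thesis by (simp add: plateau_def smooth_step_ge1_eq_1)
qed

lemma plateau_inside_eq_1:
  assumes "\<epsilon> > 0" "x + \<epsilon> \<le> t" "t \<le> y"
  shows "plateau x y \<epsilon> t = 1"
proof -
  have "(t - x) / \<epsilon> \<ge> 1" "(t - y) / \<epsilon> \<le> 0"
    using assms by (auto simp: le_divide_eq divide_le_0_iff)
  then show ?thesis by (simp add: plateau_def smooth_step_ge1_eq_1 smooth_step_nonpos_eq_0)
qed

lemma plateau_bounds:
  assumes "\<epsilon> > 0" "x \<le> y"
  shows "0 \<le> plateau x y \<epsilon> t" "plateau x y \<epsilon> t \<le> 1"
proof -
  have "(t - y) / \<epsilon> \<le> (t - x) / \<epsilon>" using assms by (simp add: divide_right_mono)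
  then have "smooth_step ((t - y) / \<epsilon>) \<le> smooth_step ((t - x) / \<epsilon>)"
    by (rule smooth_step_mono)
  then show "0 \<le> plateau x y \<epsilon> t" "plateau x y \<epsilon> t \<le> 1"
    using smooth_step_bounds[of "(t - x) / \<epsilon>"] smooth_step_bounds[of "(t - y) / \<epsilon>"]
    by (simp_all add: plateau_def)
qed

lemma plateau_has_deriv:
  "\<epsilon> > 0 \<Longrightarrow> DERIV (plateau x y \<epsilon>) t :> mollifier x \<epsilon> t - mollifier y \<epsilon> t"
  unfolding plateau_def[abs_def] by (intro DERIV_diff smooth_step_scaled_has_deriv)

lemma continuous_on_plateau: "\<epsilon> > 0 \<Longrightarrow> continuous_on S (plateau x y \<epsilon>)"
  using plateau_has_deriv by (meson DERIV_isCont continuous_at_imp_continuous_on)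

lemma test_fun_plateau:
  assumes "\<epsilon> > 0" "0 < x" "x \<le> y" "y + \<epsilon> < 1"
  shows "test_fun (plateau x y \<epsilon>)"
  unfolding test_fun_def
proof (intro conjI allI)
  show "(deriv ^^ n) (plateau x y \<epsilon>) differentiable at t" for n t
    by (rule smooth_higher_deriv_differentiable[OF smooth_plateau[OF assms(1)]])
  show "\<exists>c d. 0 < c \<and> c \<le> d \<and> d < 1 \<and> (\<forall>t. t \<notin> {c..d} \<longrightarrow> plateau x y \<epsilon> t = 0)"
    using assms by (intro exI[of _ x] exI[of _ "y + \<epsilon>"]) (auto intro!: plateau_outside_eq_0)
qed


section \<open>Weak derivatives are absolutely continuous\<close>

lemma plateau_minus_indicator_bound:
  assumes "\<epsilon> > 0" "x + \<epsilon> \<le> y"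
  shows "\<bar>plateau x y \<epsilon> t - indicator {x..y} t\<bar> \<le> indicator {x..x + \<epsilon>} t + indicator {y..y + \<epsilon>} t"
proof -
  have "0 \<le> plateau x y \<epsilon> t" "plateau x y \<epsilon> t \<le> 1"
    using plateau_bounds[of \<epsilon> x y t] assms by auto
  moreover have "t \<le> x \<or> t \<ge> y + \<epsilon> \<Longrightarrow> plateau x y \<epsilon> t = 0"
    using plateau_outside_eq_0[of \<epsilon> x y t] assms by auto
  moreover have "x + \<epsilon> \<le> t \<Longrightarrow> t \<le> y \<Longrightarrow> plateau x y \<epsilon> t = 1"
    using plateau_inside_eq_1[OF assms(1)] by blast
  ultimately show ?thesis
    using assms by (auto simp: indicator_def)
qed

lemma integral_plateau_approx:
  fixes g :: "real \<Rightarrow> real"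
  assumes g: "g absolutely_integrable_on {0..1}"
    and \<epsilon>: "\<epsilon> > 0" and x: "0 < x" and xy: "x + \<epsilon> \<le> y" and y: "y + \<epsilon> < 1"
  shows "\<bar>integral {0..1} (\<lambda>t. g t * plateau x y \<epsilon> t) - integral {x..y} g\<bar>
       \<le> integral {x..x + \<epsilon>} (\<lambda>t. \<bar>g t\<bar>) + integral {y..y + \<epsilon>} (\<lambda>t. \<bar>g t\<bar>)"
proof -
  have restrict: "(\<lambda>t. indicator {c..d} t * f t) integrable_on {0..1}
      \<and> integral {0..1} (\<lambda>t. indicator {c..d} t * f t) = integral {c..d} f"
    if "f absolutely_integrable_on {0..1}" "0 \<le> c" "d \<le> 1" for f :: "real \<Rightarrow> real" and c d
  proof -
    have "{c..d} \<inter> {0..1} = {c..d}" using that by auto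
    moreover have "f integrable_on {c..d}"
      using absolutely_integrable_imp_integrable_subinterval that by blast
    moreover have "(\<lambda>t. indicator {c..d} t * f t) = (\<lambda>t. if t \<in> {c..d} then f t else 0)"
      by (auto simp: indicator_def fun_eq_iff)
    ultimately show ?thesis
      using integrable_restrict_Int[of "{c..d}" f "{0..1}"]
        Henstock_Kurzweil_Integration.integral_restrict_Int[of "{0..1}" "{c..d}" f]
      by (simp only:)
  qed
  have abs_g: "(\<lambda>t. \<bar>g t\<bar>) absolutely_integrable_on {0..1}"
    using g by (simp add: absolutely_integrable_on_def)
  have gp: "(\<lambda>t. g t * plateau x y \<epsilon> t) integrable_on {0..1}"
    using set_lebesgue_integral_eq_integral(1)[OF
        absolutely_integrable_continuous_mult[OF continuous_on_plateau[OF \<epsilon>] g]]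
    by (simp add: mult.commute)
  note g_xy = restrict[OF g, of x y] and g_x = restrict[OF abs_g, of x "x + \<epsilon>"]
    and g_y = restrict[OF abs_g, of y "y + \<epsilon>"]
  have g_plateau: "(\<lambda>t. g t * plateau x y \<epsilon> t - indicator {x..y} t * g t) integrable_on {0..1}"
    using g_xy gp x xy y \<epsilon> by (simp add: integrable_diff)
  have bound_int: "(\<lambda>t. indicator {x..x + \<epsilon>} t * \<bar>g t\<bar> + indicator {y..y + \<epsilon>} t * \<bar>g t\<bar>)
      integrable_on {0..1}"
    using g_x g_y x xy y \<epsilon> by (simp add: integrable_add)
  have pointwise: "norm (g t * plateau x y \<epsilon> t - indicator {x..y} t * g t)
      \<le> indicator {x..x + \<epsilon>} t * \<bar>g t\<bar> + indicator {y..y + \<epsilon>} t * \<bar>g t\<bar>" for t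
  proof -
    have "g t * plateau x y \<epsilon> t - indicator {x..y} t * g t = g t * (plateau x y \<epsilon> t - indicator {x..y} t)"
      by (simp add: right_diff_distrib)
    then have "norm (g t * plateau x y \<epsilon> t - indicator {x..y} t * g t)
        = \<bar>g t\<bar> * \<bar>plateau x y \<epsilon> t - indicator {x..y} t\<bar>"
      by (simp only: real_norm_def abs_mult)
    also have "\<dots> \<le> \<bar>g t\<bar> * (indicator {x..x + \<epsilon>} t + indicator {y..y + \<epsilon>} t)"
      by (rule mult_left_mono[OF plateau_minus_indicator_bound[OF \<epsilon> xy]]) simp
    finally show ?thesis by (simp only: distrib_left mult.commute)
  qed
  have "integral {0..1} (\<lambda>t. g t * plateau x y \<epsilon> t) - integral {x..y} g
      = integral {0..1} (\<lambda>t. g t * plateau x y \<epsilon> t - indicator {x..y} t * g t)"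
    using g_xy gp x xy y \<epsilon> by (simp add: integral_diff)
  moreover have "norm (integral {0..1} (\<lambda>t. g t * plateau x y \<epsilon> t - indicator {x..y} t * g t))
      \<le> integral {0..1} (\<lambda>t. indicator {x..x + \<epsilon>} t * \<bar>g t\<bar> + indicator {y..y + \<epsilon>} t * \<bar>g t\<bar>)"
    by (rule Henstock_Kurzweil_Integration.integral_norm_bound_integral[OF g_plateau bound_int pointwise])
  moreover have "integral {0..1} (\<lambda>t. indicator {x..x + \<epsilon>} t * \<bar>g t\<bar> + indicator {y..y + \<epsilon>} t * \<bar>g t\<bar>)
      = integral {x..x + \<epsilon>} (\<lambda>t. \<bar>g t\<bar>) + integral {y..y + \<epsilon>} (\<lambda>t. \<bar>g t\<bar>)"
    using g_x g_y x xy y \<epsilon> by (simp add: integral_add)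
  ultimately show ?thesis by simp
qed

lemma weak_deriv_plateau:
  fixes u g :: "real \<Rightarrow> real"
  assumes u: "continuous_on {0..1} u" and wd: "weak_deriv u g"
    and \<epsilon>: "\<epsilon> > 0" and x: "0 < x" and xy: "x \<le> y" and y: "y + \<epsilon> < 1"
  shows "integral {0..1} (\<lambda>t. u t * mollifier x \<epsilon> t) - integral {0..1} (\<lambda>t. u t * mollifier y \<epsilon> t)
       = - integral {0..1} (\<lambda>t. g t * plateau x y \<epsilon> t)"
proof -
  have deriv_plateau: "deriv (plateau x y \<epsilon>) t = mollifier x \<epsilon> t - mollifier y \<epsilon> t" for t
    by (rule DERIV_imp_deriv[OF plateau_has_deriv[OF \<epsilon>]])
  have g: "g absolutely_integrable_on {0..1}" using wd by (simp add: weak_deriv_def)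
  have u_mx: "(\<lambda>t. u t * mollifier x \<epsilon> t) absolutely_integrable_on {0..1}"
    and u_my: "(\<lambda>t. u t * mollifier y \<epsilon> t) absolutely_integrable_on {0..1}"
    by (intro absolutely_integrable_continuous_real continuous_intros u continuous_on_mollifier[OF \<epsilon>])+
  have gp: "(\<lambda>t. g t * plateau x y \<epsilon> t) absolutely_integrable_on {0..1}"
    using absolutely_integrable_continuous_mult[OF continuous_on_plateau[OF \<epsilon>] g]
    by (simp add: mult.commute)
  have "(LINT t:{0..1}|lebesgue. u t * deriv (plateau x y \<epsilon>) t)
      = - (LINT t:{0..1}|lebesgue. g t * plateau x y \<epsilon> t)"
    using wd test_fun_plateau[OF \<epsilon> x xy y] by (simp add: weak_deriv_def)
  then have "(LINT t:{0..1}|lebesgue. u t * (mollifier x \<epsilon> t - mollifier y \<epsilon> t))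
      = - (LINT t:{0..1}|lebesgue. g t * plateau x y \<epsilon> t)"
    by (simp only: deriv_plateau)
  then show ?thesis
    using set_lebesgue_integral_eq_integral(2)[OF gp] set_lebesgue_integral_eq_integral[OF u_mx]
      set_lebesgue_integral_eq_integral[OF u_my]
    by (simp add: right_diff_distrib set_integral_diff(2)[OF u_mx u_my] integral_diff)
qed


lemma integral_short_interval_small:
  fixes f :: "real \<Rightarrow> real"
  assumes f: "f integrable_on {0..1}" and \<eta>: "\<eta> > 0"
  obtains \<delta> where "\<delta> > 0"
    "\<And>z \<epsilon>. 0 \<le> z \<Longrightarrow> 0 \<le> \<epsilon> \<Longrightarrow> z + \<epsilon> \<le> 1 \<Longrightarrow> \<epsilon> < \<delta> \<Longrightarrow> \<bar>integral {z..z + \<epsilon>} f\<bar> < \<eta>"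
proof -
  have "uniformly_continuous_on {0..1} (\<lambda>t. integral {0..t} f)"
    by (intro compact_uniformly_continuous indefinite_integral_continuous_1 f) simp
  then obtain \<delta> where \<delta>: "\<delta> > 0" "\<And>s t. s \<in> {0..1} \<Longrightarrow> t \<in> {0..1} \<Longrightarrow> dist t s < \<delta>
      \<Longrightarrow> dist (integral {0..t} f) (integral {0..s} f) < \<eta>"
    using \<eta> unfolding uniformly_continuous_on_def by metis
  show ?thesis
  proof (rule that[OF \<delta>(1)])
    fix z \<epsilon> :: real
    assume z: "0 \<le> z" "0 \<le> \<epsilon>" "z + \<epsilon> \<le> 1" "\<epsilon> < \<delta>"
    have "integral {0..z} f + integral {z..z + \<epsilon>} f = integral {0..z + \<epsilon>} f"
      by (rule Henstock_Kurzweil_Integration.integral_combine)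
         (use z in \<open>auto intro: integrable_subinterval_real[OF f]\<close>)
    moreover have "dist (integral {0..z + \<epsilon>} f) (integral {0..z} f) < \<eta>"
      using z by (intro \<delta>(2)) (auto simp: dist_real_def)
    ultimately show "\<bar>integral {z..z + \<epsilon>} f\<bar> < \<eta>"
      by (simp add: dist_real_def)
  qed
qed

lemma weak_deriv_increment_approx:
  fixes u g :: "real \<Rightarrow> real"
  assumes u: "continuous_on {0..1} u" and wd: "weak_deriv u g"
    and x: "0 < x" and xy: "x < y" and y: "y < 1" and \<eta>: "\<eta> > 0"
  shows "\<bar>u y - u x - integral {x..y} g\<bar> \<le> 4 * \<eta>"
proof -
  have g: "g absolutely_integrable_on {0..1}" using wd by (simp add: weak_deriv_def)
  have abs_g: "(\<lambda>t. \<bar>g t\<bar>) integrable_on {0..1}"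
    using g by (simp add: absolutely_integrable_on_def)
  have "uniformly_continuous_on {0..1} u"
    using u by (intro compact_uniformly_continuous) simp_all
  then obtain \<delta>1 where \<delta>1: "\<delta>1 > 0"
    "\<And>s t. s \<in> {0..1} \<Longrightarrow> t \<in> {0..1} \<Longrightarrow> dist t s < \<delta>1 \<Longrightarrow> dist (u t) (u s) < \<eta>"
    using \<eta> unfolding uniformly_continuous_on_def by metis
  obtain \<delta>2 where \<delta>2: "\<delta>2 > 0" "\<And>z \<epsilon>. 0 \<le> z \<Longrightarrow> 0 \<le> \<epsilon> \<Longrightarrow> z + \<epsilon> \<le> 1 \<Longrightarrow> \<epsilon> < \<delta>2
      \<Longrightarrow> \<bar>integral {z..z + \<epsilon>} (\<lambda>t. \<bar>g t\<bar>)\<bar> < \<eta>"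
    using integral_short_interval_small[OF abs_g \<eta>] by blast
  obtain \<epsilon> where "0 < \<epsilon>" "\<epsilon> < min \<delta>1 \<delta>2" "\<epsilon> < min (y - x) (1 - y)"
    using field_lbound_gt_zero[of "min \<delta>1 \<delta>2" "min (y - x) (1 - y)"] \<delta>1(1) \<delta>2(1) xy y
    by auto
  then have \<epsilon>: "\<epsilon> > 0" "\<epsilon> < \<delta>1" "\<epsilon> < \<delta>2" "x + \<epsilon> \<le> y" "y + \<epsilon> < 1"
    by simp_all
  have mollify: "\<bar>integral {0..1} (\<lambda>t. u t * mollifier z \<epsilon> t) - u z\<bar> \<le> \<eta>"
    and short: "integral {z..z + \<epsilon>} (\<lambda>t. \<bar>g t\<bar>) \<le> \<eta>" if "z \<in> {x, y}" for z
  proof -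
    have z: "0 \<le> z" "z + \<epsilon> \<le> 1" using that x \<epsilon> by auto
    show "\<bar>integral {0..1} (\<lambda>t. u t * mollifier z \<epsilon> t) - u z\<bar> \<le> \<eta>"
    proof (rule integral_mollifier_approx[OF u \<epsilon>(1) z])
      fix t assume "t \<in> {z..z + \<epsilon>}"
      then have "dist (u t) (u z) < \<eta>"
        using z \<epsilon> by (intro \<delta>1(2)) (auto simp: dist_real_def)
      then show "\<bar>u t - u z\<bar> \<le> \<eta>" by (simp add: dist_real_def)
    qed
    show "integral {z..z + \<epsilon>} (\<lambda>t. \<bar>g t\<bar>) \<le> \<eta>"
      using \<delta>2(2)[of z \<epsilon>] z \<epsilon> by auto
  qed
  define A where "A = u y - integral {0..1} (\<lambda>t. u t * mollifier y \<epsilon> t)"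
  define B where "B = integral {0..1} (\<lambda>t. u t * mollifier x \<epsilon> t) - u x"
  define C where "C = integral {0..1} (\<lambda>t. g t * plateau x y \<epsilon> t) - integral {x..y} g"
  have "u y - u x - integral {x..y} g = A + B + C"
    using weak_deriv_plateau[OF u wd \<epsilon>(1) x _ \<epsilon>(5)] xy unfolding A_def B_def C_def by simp
  moreover have "\<bar>A\<bar> \<le> \<eta>" "\<bar>B\<bar> \<le> \<eta>"
    using mollify[of x] mollify[of y] unfolding A_def B_def by (simp_all add: abs_minus_commute)
  moreover have "\<bar>C\<bar> \<le> 2 * \<eta>"
    using integral_plateau_approx[OF g \<epsilon>(1) x \<epsilon>(4,5)] short[of x] short[of y]
    unfolding C_def by simp
  ultimately show ?thesis
    using abs_triangle_ineq[of "A + B" C] abs_triangle_ineq[of A B] by linarith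
qed

lemma weak_deriv_integral_interior:
  fixes u g :: "real \<Rightarrow> real"
  assumes "continuous_on {0..1} u" "weak_deriv u g" "0 < x" "x < y" "y < 1"
  shows "u y - u x = integral {x..y} g"
proof -
  define D where "D = u y - u x - integral {x..y} g"
  have "D = 0"
  proof (rule ccontr)
    assume "D \<noteq> 0"
    then have "\<bar>D\<bar> / 8 > 0" by simp
    then have "\<bar>D\<bar> \<le> 4 * (\<bar>D\<bar> / 8)"
      unfolding D_def by (rule weak_deriv_increment_approx[OF assms])
    with \<open>D \<noteq> 0\<close> show False by simp
  qed
  then show ?thesis by (simp add: D_def)
qed

lemma weak_deriv_imp_AC_with_deriv:
  fixes u g :: "real \<Rightarrow> real"
  assumes u: "continuous_on {0..1} u" and wd: "weak_deriv u g"
  shows "AC_with_deriv u g"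
proof -
  have g: "g absolutely_integrable_on {0..1}" using wd by (simp add: weak_deriv_def)
  then have g_int: "g integrable_on {0..1}" using set_lebesgue_integral_eq_integral(1) by blast
  define V where "V t = u t - integral {0..t} g" for t
  have V_cont: "continuous_on {0..1} V" unfolding V_def
    by (intro continuous_intros u indefinite_integral_continuous_1 g_int)
  have V_interior: "V t = V (1/2)" if "t \<in> {0<..<1}" for t
  proof -
    have V_eq: "V b = V a" if "0 < a" "a < b" "b < 1" for a b
    proof -
      have "integral {0..a} g + integral {a..b} g = integral {0..b} g"
        by (rule Henstock_Kurzweil_Integration.integral_combine)
           (use that in \<open>auto intro: integrable_subinterval_real[OF g_int]\<close>)
      then show ?thesis
        using weak_deriv_integral_interior[OF u wd that] by (simp add: V_def)
    qed
    consider "t < 1/2" | "t = 1/2" | "t > 1/2" by linarith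
    then show ?thesis
    proof cases
      case 1
      then show ?thesis using V_eq[of t "1/2"] that by simp
    next
      case 2
      then show ?thesis by (simp only:)
    next
      case 3
      then show ?thesis using V_eq[of "1/2" t] that by simp
    qed
  qed
  have V_const: "V t = V (1/2)" if "t \<in> {0..1}" for t
  proof (rule continuous_constant_on_closure[of "{0<..<1}" V])
    show "continuous_on (closure {0<..<1}) V" using V_cont by simp
    show "t \<in> closure {0<..<1}" using that by simp
  qed (rule V_interior)
  have "u t = u 0 + integral {0..t} g" if "t \<in> {0..1}" for t
    using V_const[OF that] V_const[of 0] by (simp add: V_def)
  with g show ?thesis unfolding AC_with_deriv_def by blast
qed


section \<open>Square integrable functions and H1\<close>

lemma set_borel_measurable_lebesgue_iff:
  "set_borel_measurable lebesgue S f \<longleftrightarrow> f \<in> borel_measurable (lebesgue_on S)"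
  if "S \<in> sets lebesgue" for f :: "real \<Rightarrow> real"
  using that by (simp add: set_borel_measurable_def borel_measurable_restrict_space_iff)

lemma L2_continuous:
  assumes "continuous_on {0..1} f"
  shows "L2 f"
proof -
  have "f \<in> borel_measurable (lebesgue_on {0..1})"
    using assms by (rule continuous_imp_measurable_on_sets_lebesgue) simp
  moreover have "(\<lambda>x. (f x)^2) absolutely_integrable_on {0..1}"
    using assms by (intro absolutely_integrable_continuous_real continuous_intros)
  ultimately show ?thesis
    by (simp add: L2_def set_borel_measurable_lebesgue_iff)
qed

lemma Linf_imp_L2:
  assumes "Linf f"
  shows "L2 f"
proof -
  obtain M where f [measurable]: "f \<in> borel_measurable (lebesgue_on {0..1})"
    and M: "AE x in lebesgue. x \<in> {0..1} \<longrightarrow> \<bar>f x\<bar> \<le> M"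
    using assms by (auto simp: Linf_def set_borel_measurable_lebesgue_iff)
  have dominant: "set_integrable lebesgue {0..1::real} (\<lambda>x. M^2)"
    by (rule absolutely_integrable_continuous_real) simp
  have "AE x in lebesgue. x \<in> {0..1} \<longrightarrow> norm ((f x)^2) \<le> norm (M^2)"
    using M
  proof eventually_elim
    case (elim x)
    show ?case
    proof
      assume "x \<in> {0..1}"
      then have "\<bar>f x\<bar>^2 \<le> M^2" using elim by (intro power_mono) auto
      then show "norm ((f x)^2) \<le> norm (M^2)" by simp
    qed
  qed
  moreover have "(\<lambda>x. (f x)^2) \<in> borel_measurable (lebesgue_on {0..1})"
    by measurable
  ultimately have "set_integrable lebesgue {0..1} (\<lambda>x. (f x)^2)"
    by (intro set_integrable_bound[OF dominant]) (simp_all add: set_borel_measurable_lebesgue_iff)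
  with f show ?thesis
    by (simp add: L2_def set_borel_measurable_lebesgue_iff)
qed

lemma L2_mult_continuous:
  assumes "continuous_on {0..1} h" "L2 f"
  shows "L2 (\<lambda>x. h x * f x)"
proof -
  have "(\<lambda>x. (h x)^2 * (f x)^2) absolutely_integrable_on {0..1}"
    using assms by (intro absolutely_integrable_continuous_mult continuous_intros) (simp_all add: L2_def)
  moreover have "h \<in> borel_measurable (lebesgue_on {0..1})"
    using assms(1) by (rule continuous_imp_measurable_on_sets_lebesgue) simp
  ultimately show ?thesis
    using assms(2) by (auto simp: L2_def set_borel_measurable_lebesgue_iff power_mult_distrib)
qed

lemma L2_add:
  assumes f: "L2 f" and g: "L2 g"
  shows "L2 (\<lambda>x. f x + g x)"
proof -
  have meas [measurable]: "f \<in> borel_measurable (lebesgue_on {0..1})" "g \<in> borel_measurable (lebesgue_on {0..1})"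
    using f g by (simp_all add: L2_def set_borel_measurable_lebesgue_iff)
  have dominant: "set_integrable lebesgue {0..1} (\<lambda>x. 2 * (f x)^2 + 2 * (g x)^2)"
    using f g unfolding L2_def by (intro set_integral_add set_integrable_mult_right) auto
  have "(\<lambda>x. (f x + g x)^2) \<in> borel_measurable (lebesgue_on {0..1})"
    by measurable
  moreover have "norm ((f x + g x)^2) \<le> norm (2 * (f x)^2 + 2 * (g x)^2)" for x
  proof -
    have "(f x + g x)^2 \<le> 2 * (f x)^2 + 2 * (g x)^2"
      using zero_le_power2[of "f x - g x"] by (simp add: power2_eq_square algebra_simps)
    then show ?thesis by (smt (verit) real_norm_def zero_le_power2)
  qed
  ultimately have "set_integrable lebesgue {0..1} (\<lambda>x. (f x + g x)^2)"
    by (intro set_integrable_bound[OF dominant]) (simp_all add: set_borel_measurable_lebesgue_iff)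
  with meas show ?thesis
    by (simp add: L2_def set_borel_measurable_lebesgue_iff)
qed

lemma H1_mult:
  assumes a: "continuous_on {0..1} a" "weak_deriv a a'" "Linf a'" and g: "H1 g"
  shows "H1 (\<lambda>x. a x * g x)"
proof -
  obtain g' where g': "L2 g'" "weak_deriv g g'" and g_cont: "continuous_on {0..1} g"
    using g by (auto simp: H1_def)
  have "AC_with_deriv (\<lambda>x. a x * g x) (\<lambda>x. a' x * g x + a x * g' x)"
    using a g' g_cont by (intro AC_with_deriv_mult weak_deriv_imp_AC_with_deriv)
  then have "weak_deriv (\<lambda>x. a x * g x) (\<lambda>x. a' x * g x + a x * g' x)"
    by (rule AC_with_deriv_imp_weak_deriv)
  moreover have "L2 (\<lambda>x. g x * a' x + a x * g' x)"
    by (intro L2_add L2_mult_continuous g_cont a(1) g'(1) Linf_imp_L2[OF a(3)])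
  then have "L2 (\<lambda>x. a' x * g x + a x * g' x)"
    by (simp add: mult.commute)
  moreover have "continuous_on {0..1} (\<lambda>x. a x * g x)"
    using a g_cont by (intro continuous_intros)
  ultimately show ?thesis
    unfolding H1_def using L2_continuous by blast
qed


section \<open>Vanishing at the degeneracy point\<close>

lemma AC_with_deriv_increment_le:
  assumes a: "AC_with_deriv a a'" and M: "AE x in lebesgue. x \<in> {0..1} \<longrightarrow> \<bar>a' x\<bar> \<le> M"
    and st: "0 \<le> s" "s \<le> t" "t \<le> 1"
  shows "a t - a s \<le> M * (t - s)"
proof -
  have a': "a' absolutely_integrable_on {0..1}" by (rule AC_with_deriv_D(1)[OF a])
  then have a'_st: "a' absolutely_integrable_on {s..t}"
    by (rule absolutely_integrable_on_subinterval) (use st in auto)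
  have "integral {0..s} a' + integral {s..t} a' = integral {0..t} a'"
    by (rule Henstock_Kurzweil_Integration.integral_combine)
       (use st a' in \<open>auto intro: absolutely_integrable_imp_integrable_subinterval\<close>)
  then have "a t - a s = (\<integral>x. indicator {s..t} x * a' x \<partial>lebesgue)"
    using AC_with_deriv_D(2)[OF a, of s] AC_with_deriv_D(2)[OF a, of t] st
    by (simp add: lebesgue_integral_indicator_eq_integral[OF a'_st])
  also have "\<dots> \<le> (\<integral>x. indicator {s..t} x * M \<partial>lebesgue)"
  proof (rule integral_mono_AE)
    show "integrable lebesgue (\<lambda>x. indicator {s..t} x * a' x)"
      using a'_st by (simp add: set_integrable_def)
    show "integrable lebesgue (\<lambda>x. indicator {s..t} x * M)"
      using absolutely_integrable_continuous_real[of s t "\<lambda>x. M"] by (simp add: set_integrable_def)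
    show "AE x in lebesgue. indicator {s..t} x * a' x \<le> indicator {s..t} x * M"
      using M by eventually_elim (use st in \<open>auto simp: indicator_def\<close>)
  qed
  also have "\<dots> = M * (t - s)"
    using st by (simp add: mult.commute)
  finally show ?thesis .
qed

lemma not_integrable_above_inverse_distance:
  fixes h :: "real \<Rightarrow> real"
  assumes c: "c > 0" and d: "d > 0"
    and h_nonneg: "\<And>t. t \<in> {x0..x0 + d} \<Longrightarrow> 0 \<le> h t"
    and h_ge: "\<And>t. t \<in> {x0<..x0 + d} \<Longrightarrow> c / (t - x0) \<le> h t"
  shows "\<not> h integrable_on {x0..x0 + d}"
proof
  assume h: "h integrable_on {x0..x0 + d}"
  define J where "J = integral {x0..x0 + d} h"
  have "J \<ge> 0" unfolding J_def using h h_nonneg by (intro integral_nonneg) auto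
  define \<eta> where "\<eta> = d * exp (- J / c - 1)"
    \<comment> \<open>chosen so that the logarithmic lower bound on [x0 + \<eta>, x0 + d] is J + c\<close>
  have "0 \<le> J / c" using c \<open>J \<ge> 0\<close> by simp
  then have \<eta>: "0 < \<eta>" "\<eta> < d"
    using d by (auto simp: \<eta>_def)
  have "((\<lambda>t. c / (t - x0)) has_integral (c * ln d - c * ln \<eta>)) {x0 + \<eta>..x0 + d}"
  proof -
    have "((\<lambda>t. c / (t - x0)) has_integral (c * ln (x0 + d - x0) - c * ln (x0 + \<eta> - x0)))
        {x0 + \<eta>..x0 + d}"
    proof (rule fundamental_theorem_of_calculus)
      fix t assume "t \<in> {x0 + \<eta>..x0 + d}"
      then have "t - x0 > 0" using \<eta> by auto
      then have "DERIV (\<lambda>t. c * ln (t - x0)) t :> c / (t - x0)"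
        by (auto intro!: derivative_eq_intros)
      then show "((\<lambda>t. c * ln (t - x0)) has_vector_derivative c / (t - x0))
          (at t within {x0 + \<eta>..x0 + d})"
        by (simp add: has_real_derivative_iff_has_vector_derivative[symmetric] has_field_derivative_at_within)
    qed (use \<eta> in simp)
    then show ?thesis by simp
  qed
  moreover have "c * ln d - c * ln \<eta> = J + c"
    using d c by (simp add: \<eta>_def ln_mult field_simps)
  moreover have h_sub: "h integrable_on {x0 + \<eta>..x0 + d}"
    using \<eta> by (intro integrable_subinterval_real[OF h]) auto
  ultimately have "J + c \<le> integral {x0 + \<eta>..x0 + d} h"
    by (intro has_integral_le[OF _ integrable_integral[OF h_sub]]) (use h_ge \<eta> in auto)
  also have "\<dots> \<le> J"
    unfolding J_def by (rule integral_subset_le) (use h_sub h h_nonneg \<eta> in auto)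
  finally show False using c by simp
qed

lemma weighted_L2_vanishes_at_degeneracy:
  fixes a u :: "real \<Rightarrow> real"
  assumes x0: "0 \<le> x0" "x0 < 1" and M: "M > 0" and a_x0: "a x0 = 0"
    and a_pos: "\<And>t. t \<in> {x0<..1} \<Longrightarrow> 0 < a t"
    and a_Lipschitz: "\<And>t. t \<in> {x0..1} \<Longrightarrow> a t \<le> M * (t - x0)"
    and u: "continuous_on {0..1} u" and u_a: "(\<lambda>t. (u t)^2 / a t) integrable_on {0..1}"
  shows "u x0 = 0"
proof (rule ccontr)
  assume "u x0 \<noteq> 0"
  define c where "c = (u x0)^2 / 2"
  have c: "c > 0" using \<open>u x0 \<noteq> 0\<close> by (simp add: c_def)
  have "continuous_on {0..1} (\<lambda>t. (u t)^2)" using u by (intro continuous_intros)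
  moreover have "x0 \<in> {0..1}" using x0 by simp
  ultimately obtain \<delta> where \<delta>: "\<delta> > 0"
    "\<And>t. t \<in> {0..1} \<Longrightarrow> dist t x0 \<le> \<delta> \<Longrightarrow> dist ((u t)^2) ((u x0)^2) < c"
    using continuous_onE[OF _ _ c] by blast
  define d where "d = min \<delta> (1 - x0)"
  have d: "d > 0" "d \<le> \<delta>" "x0 + d \<le> 1" using \<delta>(1) x0 by (simp_all add: d_def)
  have "\<not> (\<lambda>t. (u t)^2 / a t) integrable_on {x0..x0 + d}"
  proof (rule not_integrable_above_inverse_distance[OF divide_pos_pos[OF c M] d(1)])
    fix t assume t: "t \<in> {x0..x0 + d}"
    show "0 \<le> (u t)^2 / a t"
    proof (cases "t = x0")
      case False
      then have "0 < a t" using t d by (intro a_pos) auto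
      then show ?thesis by simp
    qed (simp add: a_x0)
  next
    fix t assume t: "t \<in> {x0<..x0 + d}"
    then have "dist ((u t)^2) ((u x0)^2) < c"
      using x0 d by (intro \<delta>(2)) (auto simp: dist_real_def)
    then have "c \<le> (u t)^2" unfolding c_def dist_real_def abs_diff_less_iff by linarith
    moreover have "t \<in> {x0<..1}" using t d by auto
    then have "0 < a t" "a t \<le> M * (t - x0)" using a_pos a_Lipschitz by auto
    ultimately have "c / (M * (t - x0)) \<le> (u t)^2 / a t"
      by (intro frac_le) auto
    then show "c / M / (t - x0) \<le> (u t)^2 / a t" by simp
  qed
  moreover have "(\<lambda>t. (u t)^2 / a t) integrable_on {x0..x0 + d}"
    using x0 d by (intro integrable_subinterval_real[OF u_a]) auto
  ultimately show False by contradiction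
qed

lemma SD_weight_Lipschitz:
  assumes "SD a x0 K"
  obtains M where "M > 0" "\<And>t. t \<in> {x0..1} \<Longrightarrow> a t \<le> M * (t - x0)"
proof -
  obtain a' M where a: "continuous_on {0..1} a" "weak_deriv a a'"
    and M: "AE x in lebesgue. x \<in> {0..1} \<longrightarrow> \<bar>a' x\<bar> \<le> M"
    using assms by (auto simp: SD_def W1inf_def Linf_def)
  have "AC_with_deriv a a'" by (rule weak_deriv_imp_AC_with_deriv[OF a])
  moreover have "AE x in lebesgue. x \<in> {0..1} \<longrightarrow> \<bar>a' x\<bar> \<le> max M 1"
    using M by eventually_elim auto
  ultimately have "a t - a x0 \<le> max M 1 * (t - x0)" if "t \<in> {x0..1}" for t
    using that assms by (intro AC_with_deriv_increment_le) (auto simp: SD_def)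
  then show ?thesis
    using that[of "max M 1"] assms by (simp add: SD_def)
qed

theorem proposition2p5:
  fixes a :: "real \<Rightarrow> real" and x0 K :: real
  assumes "SD a x0 K"
  shows "dom_A2 a = H2_w a \<and> H2_w a = D_set a x0"
proof -
  have "u \<in> D_set a x0" if u: "u \<in> H2_w a" for u
  proof -
    obtain g where g: "weak_deriv u g" "H1 g" using u by (auto simp: H2_w_def)
    obtain a' where a: "continuous_on {0..1} a" "weak_deriv a a'" "Linf a'"
      using assms by (auto simp: SD_def W1inf_def)
    obtain M where "M > 0" "\<And>t. t \<in> {x0..1} \<Longrightarrow> a t \<le> M * (t - x0)"
      using SD_weight_Lipschitz[OF assms] by blast
    then have "u x0 = 0"
      using assms u
      by (intro weighted_L2_vanishes_at_degeneracy[of x0 M a u])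
         (auto simp: SD_def H2_w_def H1_w_def L2_w_def H1_0_def H1_def
           intro: set_lebesgue_integral_eq_integral(1))
    have "H1 (\<lambda>x. a x * g x)" by (rule H1_mult[OF a g(2)])
    moreover have "a x0 * g x0 = 0" using assms by (simp add: SD_def)
    moreover have "AE x in lebesgue. x \<in> {0..1} \<longrightarrow> a x * g x = a x * g x" by simp
    ultimately have "\<exists>g h. weak_deriv u g \<and> H1 h
        \<and> (AE x in lebesgue. x \<in> {0..1} \<longrightarrow> h x = a x * g x) \<and> h x0 = 0"
      using g(1) by blast
    with u \<open>u x0 = 0\<close> show ?thesis
      by (simp add: D_set_def)
  qed
  then show ?thesis by (auto simp: dom_A2_def D_set_def)
qed

end
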